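(* Let $\tilde t[\mathbf x](z,\mathbf Z)$ be an abstract $\mathcal L$-hedge containing the single $\mathcal Z$-variable $z$, and let $a\in\mathcal{T_{L_\mathfrak A}(\emptyset)}$ and $c\in\mathcal{T_{L_\mathfrak B}(\emptyset)}$ be ground terms. If $(\tilde t\sigma_{\mathfrak B,z\mapsto c})^\mathfrak B=(\tilde t\sigma'_{\mathfrak B,z\mapsto c})^\mathfrak B$ for all $\sigma_{\mathfrak B,z\mapsto c},\sigma'_{\mathfrak B,z\mapsto c}\in g\text-Sub(\mathcal{L,L_\mathfrak B})$, then the $\mathcal L$-justification $z\to\tilde t[\mathbf x](z,\mathbf Z)$ characteristically justifies $(\mathfrak{A,B})\models a\to\tilde t\sigma_{\mathfrak A,z\mapsto a}\mathrel{:\!\cdot} c\to\tilde t\sigma_{\mathfrak B,z\mapsto c}$, for all $\sigma_{\mathfrak A,z\mapsto a}\in g\text-Sub(\mathcal{L,L_\mathfrak A})$ and $\sigma_{\mathfrak B,z\mapsto c}\in g\text-Sub(\mathcal{L,L_\mathfrak B})$ with $(\sigma_\mathfrak A\upharpoonright\mathcal X)=(\sigma_\mathfrak B\upharpoonright\mathcal X)$.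
   Context: $\mathfrak A$ is an algebra over $\mathcal L_\mathfrak A=\{\dot f_i\mid i\in I\}$ and $\mathfrak B$ an algebra over $\mathcal L_\mathfrak B=\{\dot g_i\mid i\in I\}$ (same index set $I$). $\mathcal L=\{\dot h_i\mid i\in I\}$ with $r_\mathcal L(\dot h_i)=\max\{r(\dot f_i),r(\dot g_i)\}$. Variables: $\mathcal X$-variables (placeholders for constant symbols), $\mathcal Z$-variables, and hedge variables $Z\in\mathscr Z$ which may be replaced by the empty hedge $\dot\lambda$. An $\mathcal L$-hedge is an $\mathcal L$-term over these variables; abstract means no constant symbols. A ground $(\mathcal{L,L_\mathfrak A})$-substitution maps each $\dot h_i\mapsto\dot f_i$, $\mathcal X$-variables to constant symbols of $\mathcal L_\mathfrak A$, $\mathcal Z$-variables to ground $\mathcal L_\mathfrak A$-terms, hedge variables to ground $\mathcal L_\mathfrak A$-terms or $\dot\lambda$; $g\text-Sub(\mathcal{L,L_\mathfrak A})$ is the set of these (similarly for $\mathfrak B$); $\sigma_{\mathfrak A,z\mapsto a}$ denotes one mapping $z$ to $a$. An $\mathcal L$-justification is $\tilde s\to\tilde t$ with abstract hedges and $\mathcal Z(\tilde t)\subseteq\mathcal Z(\tilde s)$. $Jus_{(\mathfrak{A,B})}(a\to b\mathrel{:\!\cdot} c\to d)$ is the set of justifications for which there are ground substitutions $\sigma_\mathfrak A,\sigma_\mathfrak B$ agreeing on $\mathcal X$ with $a^\mathfrak A\to b^\mathfrak A=(\tilde s\sigma_\mathfrak A)^\mathfrak A\to(\tilde t\sigma_\mathfrak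 A)^\mathfrak A$ and $c^\mathfrak B\to d^\mathfrak B=(\tilde s\sigma_\mathfrak B)^\mathfrak B\to(\tilde t\sigma_\mathfrak B)^\mathfrak B$. $(\mathfrak{A,B})\models a\to b\mathrel{:\!\cdot} c\to d$ iff either only trivial justifications (those valid for all arrows in both algebras) exist for $a\to b$ in $\mathfrak A$ and $c\to d$ in $\mathfrak B$, or $Jus_{(\mathfrak{A,B})}(a\to b\mathrel{:\!\cdot} c\to d)$ contains a non-trivial justification and is inclusion-maximal among sets $Jus_{(\mathfrak{A,B})}(a\to b\mathrel{:\!\cdot} c\to d')$ (${d'}^\mathfrak B\neq d^\mathfrak B$) containing a non-trivial justification. A justification $\tilde s\to\tilde t$ characteristically justifies the arrow proportion if it lies in $Jus_{(\mathfrak{A,B})}(a\to b\mathrel{:\!\cdot} c\to d)$ and lying in $Jus_{(\mathfrak{A,B})}(a\to b\mathrel{:\!\cdot} c\to d')$ implies $d'=d$; this entails that the arrow proportion holds. *)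

theory Defs
  imports Main
begin

text \<open>Signatures share an index type 'i. An algebra over L_A is given by an arity
  function ar and an interpretation op of each function symbol; constant symbols
  are the indices of arity 0.\<close>

datatype 'i gterm = Fn 'i "'i gterm list"

fun wf_g :: "('i \<Rightarrow> nat) \<Rightarrow> 'i gterm \<Rightarrow> bool" where
  "wf_g ar (Fn i ts) = (length ts = ar i \<and> list_all (wf_g ar) ts)"

fun gval :: "('i \<Rightarrow> 'a list \<Rightarrow> 'a) \<Rightarrow> 'i gterm \<Rightarrow> 'a" where
  "gval op (Fn i ts) = op i (map (gval op) ts)"

datatype ('i,'x,'z,'h) lterm = XV 'x | ZV 'z | HV 'h | App 'i "('i,'x,'z,'h) lterm list"

definition rL :: "('i \<Rightarrow> nat) \<Rightarrow> ('i \<Rightarrow> nat) \<Rightarrow> 'i \<Rightarrow> nat" where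
  "rL arA arB i = max (arA i) (arB i)"

fun wf_L :: "('i \<Rightarrow> nat) \<Rightarrow> ('i,'x,'z,'h) lterm \<Rightarrow> bool" where
  "wf_L r (App i ts) = (length ts = r i \<and> list_all (wf_L r) ts)"
| "wf_L r _ = True"

fun no_const :: "('i \<Rightarrow> nat) \<Rightarrow> ('i,'x,'z,'h) lterm \<Rightarrow> bool" where
  "no_const r (App i ts) = (r i \<noteq> 0 \<and> list_all (no_const r) ts)"
| "no_const r _ = True"

definition abstract_hedge :: "('i \<Rightarrow> nat) \<Rightarrow> ('i,'x,'z,'h) lterm \<Rightarrow> bool" where
  "abstract_hedge r t = (wf_L r t \<and> no_const r t)"

fun zvars :: "('i,'x,'z,'h) lterm \<Rightarrow> 'z set" where
  "zvars (ZV z) = {z}"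
| "zvars (App i ts) = (\<Union>t\<in>set ts. zvars t)"
| "zvars _ = {}"

definition is_justification :: "('i \<Rightarrow> nat) \<Rightarrow> ('i,'x,'z,'h) lterm \<Rightarrow> ('i,'x,'z,'h) lterm \<Rightarrow> bool" where
  "is_justification r s t = (abstract_hedge r s \<and> abstract_hedge r t \<and> zvars t \<subseteq> zvars s)"

text \<open>Ground substitutions: h_i is sent to the i-th symbol of the target signature
  (implicit), X-variables to constant symbols, Z-variables to ground terms,
  hedge variables to a ground term (Some) or the empty hedge (None).\<close>

record ('i,'x,'z,'h) gsub =
  sx :: "'x \<Rightarrow> 'i"
  sz :: "'z \<Rightarrow> 'i gterm"
  sh :: "'h \<Rightarrow> 'i gterm option"

definition is_gsub :: "('i \<Rightarrow> nat) \<Rightarrow> ('i,'x,'z,'h) gsub \<Rightarrow> bool" where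
  "is_gsub ar \<sigma> = ((\<forall>x. ar (sx \<sigma> x) = 0) \<and> (\<forall>z. wf_g ar (sz \<sigma> z))
     \<and> (\<forall>Z u. sh \<sigma> Z = Some u \<longrightarrow> wf_g ar u))"

text \<open>Applying a substitution yields a hedge (list of ground terms); empty hedges
  vanish from argument lists.\<close>

fun app_sub :: "('i,'x,'z,'h) gsub \<Rightarrow> ('i,'x,'z,'h) lterm \<Rightarrow> 'i gterm list" where
  "app_sub \<sigma> (XV x) = [Fn (sx \<sigma> x) []]"
| "app_sub \<sigma> (ZV z) = [sz \<sigma> z]"
| "app_sub \<sigma> (HV Z) = (case sh \<sigma> Z of None \<Rightarrow> [] | Some u \<Rightarrow> [u])"
| "app_sub \<sigma> (App i ts) = [Fn i (concat (map (app_sub \<sigma>) ts))]"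

definition hval :: "('i \<Rightarrow> nat) \<Rightarrow> ('i \<Rightarrow> 'a list \<Rightarrow> 'a) \<Rightarrow> ('i,'x,'z,'h) gsub
    \<Rightarrow> ('i,'x,'z,'h) lterm \<Rightarrow> 'a option" where
  "hval ar op \<sigma> t = (case app_sub \<sigma> t of [u] \<Rightarrow> (if wf_g ar u then Some (gval op u) else None)
                     | _ \<Rightarrow> None)"

definition Jus :: "('i \<Rightarrow> nat) \<Rightarrow> ('i \<Rightarrow> 'a list \<Rightarrow> 'a) \<Rightarrow> ('i \<Rightarrow> nat) \<Rightarrow> ('i \<Rightarrow> 'b list \<Rightarrow> 'b)
    \<Rightarrow> 'a \<Rightarrow> 'a \<Rightarrow> 'b \<Rightarrow> 'b \<Rightarrow> (('i,'x,'z,'h) lterm \<times> ('i,'x,'z,'h) lterm) set" where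
  "Jus arA opA arB opB a b c d = {(s,t). is_justification (rL arA arB) s t \<and>
     (\<exists>\<sigma>A \<sigma>B. is_gsub arA \<sigma>A \<and> is_gsub arB \<sigma>B \<and> sx \<sigma>A = sx \<sigma>B \<and>
        hval arA opA \<sigma>A s = Some a \<and> hval arA opA \<sigma>A t = Some b \<and>
        hval arB opB \<sigma>B s = Some c \<and> hval arB opB \<sigma>B t = Some d)}"

definition char_justifies :: "('i \<Rightarrow> nat) \<Rightarrow> ('i \<Rightarrow> 'a list \<Rightarrow> 'a) \<Rightarrow> ('i \<Rightarrow> nat) \<Rightarrow> ('i \<Rightarrow> 'b list \<Rightarrow> 'b)
    \<Rightarrow> ('i,'x,'z,'h) lterm \<Rightarrow> ('i,'x,'z,'h) lterm \<Rightarrow> 'a \<Rightarrow> 'a \<Rightarrow> 'b \<Rightarrow> 'b \<Rightarrow> bool" where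
  "char_justifies arA opA arB opB s t a b c d =
     ((s,t) \<in> Jus arA opA arB opB a b c d \<and>
      (\<forall>d'. (s,t) \<in> Jus arA opA arB opB a b c d' \<longrightarrow> d' = d))"

end

theory Submission
  imports Defs
begin

text \<open>The value of \<open>t\<sigma>\<close> in an algebra depends on the images of the
  \<open>\<Z>\<close>-variables only through their well-formedness and their values.  So from any
  witness of \<open>(z \<rightarrow> t) \<in> Jus(a \<rightarrow> b :\<cdot> c \<rightarrow> d')\<close>, whose \<open>\<B>\<close>-substitution sends \<open>z\<close>
  to some term with the value of \<open>c\<close>, we obtain an equally good witness sending
  \<open>z\<close> to \<open>c\<close> itself.  The hypothesis that \<open>t\<sigma>\<close> has a unique value once
  \<open>z \<mapsto> c\<close> then forces \<open>d' = d\<close>.\<close>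

definition same_value :: "('i \<Rightarrow> nat) \<Rightarrow> ('i \<Rightarrow> 'a list \<Rightarrow> 'a) \<Rightarrow> 'i gterm \<Rightarrow> 'i gterm \<Rightarrow> bool" where
  "same_value ar op u v \<longleftrightarrow>
     (wf_g ar u \<longleftrightarrow> wf_g ar v) \<and> (wf_g ar u \<longrightarrow> gval op u = gval op v)"

lemma list_all2_same_value_wf_map:
  assumes "list_all2 (same_value ar op) us vs"
  shows "(list_all (wf_g ar) us \<longleftrightarrow> list_all (wf_g ar) vs) \<and>
         (list_all (wf_g ar) us \<longrightarrow> map (gval op) us = map (gval op) vs)"
  using assms by (induction rule: list_all2_induct) (auto simp: same_value_def)

lemma same_value_Fn:
  assumes "list_all2 (same_value ar op) us vs"
  shows "same_value ar op (Fn i us) (Fn i vs)"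
  using list_all2_same_value_wf_map[OF assms] list_all2_lengthD[OF assms]
  by (auto simp: same_value_def)

lemma list_all2_concat_map:
  assumes "\<And>t. t \<in> set ts \<Longrightarrow> list_all2 R (f t) (g t)"
  shows "list_all2 R (concat (map f ts)) (concat (map g ts))"
  using assms by (induction ts) (auto intro: list_all2_appendI)

lemma list_all2_same_value_app_sub:
  assumes "sx \<sigma> = sx \<sigma>'" and "sh \<sigma> = sh \<sigma>'"
    and "\<And>y. same_value ar op (sz \<sigma> y) (sz \<sigma>' y)"
  shows "list_all2 (same_value ar op) (app_sub \<sigma> t) (app_sub \<sigma>' t)"
proof (induction t)
  case (App i ts)
  then show ?case by (auto intro!: same_value_Fn list_all2_concat_map)
qed (use assms in \<open>auto simp: same_value_def split: option.splits\<close>)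

lemma hval_cong_same_value:
  assumes "sx \<sigma> = sx \<sigma>'" and "sh \<sigma> = sh \<sigma>'"
    and "\<And>y. same_value ar op (sz \<sigma> y) (sz \<sigma>' y)"
  shows "hval ar op \<sigma> t = hval ar op \<sigma>' t"
proof -
  have "list_all2 (same_value ar op) (app_sub \<sigma> t) (app_sub \<sigma>' t)"
    using assms by (rule list_all2_same_value_app_sub)
  then show ?thesis
    unfolding hval_def \<comment> \<open>\<open>remdups_adj.cases\<close> splits into \<open>[]\<close>, \<open>[u]\<close> and \<open>u # v # us\<close>\<close>
    by (cases "app_sub \<sigma> t" rule: remdups_adj.cases)
       (auto simp: same_value_def list_all2_Cons1)
qed

lemma hval_ZV:
  "hval ar op \<sigma> (ZV z) = (if wf_g ar (sz \<sigma> z) then Some (gval op (sz \<sigma> z)) else None)"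
  by (simp add: hval_def)

lemma hval_sz_update_same_value:
  assumes "hval ar op \<sigma> (ZV z) = Some (gval op c)" and "wf_g ar c"
  shows "hval ar op (\<sigma>\<lparr>sz := (sz \<sigma>)(z := c)\<rparr>) t = hval ar op \<sigma> t"
proof (rule hval_cong_same_value)
  show "same_value ar op (sz (\<sigma>\<lparr>sz := (sz \<sigma>)(z := c)\<rparr>) y) (sz \<sigma> y)" for y
    using assms by (auto simp: same_value_def hval_ZV split: if_splits)
qed simp_all

lemma is_gsub_sz_update:
  assumes "is_gsub ar \<sigma>" and "wf_g ar c"
  shows "is_gsub ar (\<sigma>\<lparr>sz := (sz \<sigma>)(z := c)\<rparr>)"
  using assms by (auto simp: is_gsub_def)

lemma is_justification_ZV:
  assumes "abstract_hedge r t" and "zvars t \<subseteq> {z}"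
  shows "is_justification r (ZV z) t"
  using assms by (simp add: is_justification_def abstract_hedge_def)

lemma Jus_ZV_obtain_gsub_at:
  assumes "(ZV z, t) \<in> Jus arA opA arB opB a b (gval opB c) d" and "wf_g arB c"
  obtains \<sigma> :: "('i,'x,'z,'h) gsub"
  where "is_gsub arB \<sigma>" and "sz \<sigma> z = c" and "hval arB opB \<sigma> t = Some d"
proof -
  from assms(1) obtain \<sigma>' :: "('i,'x,'z,'h) gsub" where
    "is_gsub arB \<sigma>'" "hval arB opB \<sigma>' (ZV z) = Some (gval opB c)"
    "hval arB opB \<sigma>' t = Some d"
    unfolding Jus_def by blast
  with assms(2) show thesis
    by (intro that[of "\<sigma>'\<lparr>sz := (sz \<sigma>')(z := c)\<rparr>"])
       (simp_all add: is_gsub_sz_update hval_sz_update_same_value)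
qed

theorem mainTheorem2:
  fixes arA :: "'i \<Rightarrow> nat" and opA :: "'i \<Rightarrow> 'a list \<Rightarrow> 'a"
    and arB :: "'i \<Rightarrow> nat" and opB :: "'i \<Rightarrow> 'b list \<Rightarrow> 'b"
    and t :: "('i,'x,'z,'h) lterm" and z :: 'z and a c :: "'i gterm"
  assumes "abstract_hedge (rL arA arB) t"
    and "zvars t = {z}"
    and "wf_g arA a" and "wf_g arB c"
    and "\<forall>(\<sigma>::('i,'x,'z,'h) gsub) \<sigma>' v v'. is_gsub arB \<sigma> \<and> is_gsub arB \<sigma>' \<and>
           sz \<sigma> z = c \<and> sz \<sigma>' z = c \<and>
           hval arB opB \<sigma> t = Some v \<and> hval arB opB \<sigma>' t = Some v' \<longrightarrow> v = v'"
  shows "\<forall>(\<sigma>A::('i,'x,'z,'h) gsub) (\<sigma>B::('i,'x,'z,'h) gsub) b d.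
           is_gsub arA \<sigma>A \<and> is_gsub arB \<sigma>B \<and> sz \<sigma>A z = a \<and> sz \<sigma>B z = c \<and>
           sx \<sigma>A = sx \<sigma>B \<and>
           hval arA opA \<sigma>A t = Some b \<and> hval arB opB \<sigma>B t = Some d \<longrightarrow>
           char_justifies arA opA arB opB (ZV z) t (gval opA a) b (gval opB c) d"
proof (intro allI impI)
  fix \<sigma>A \<sigma>B :: "('i,'x,'z,'h) gsub" and b d
  assume \<sigma>: "is_gsub arA \<sigma>A \<and> is_gsub arB \<sigma>B \<and> sz \<sigma>A z = a \<and> sz \<sigma>B z = c \<and>
           sx \<sigma>A = sx \<sigma>B \<and> hval arA opA \<sigma>A t = Some b \<and> hval arB opB \<sigma>B t = Some d"
  have "is_justification (rL arA arB) (ZV z) t"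
    using assms(1,2) by (simp add: is_justification_ZV)
  with \<sigma> assms(3,4) have "(ZV z, t) \<in> Jus arA opA arB opB (gval opA a) b (gval opB c) d"
    unfolding Jus_def by (fastforce simp: hval_ZV)
  moreover have "d' = d"
    if "(ZV z, t) \<in> Jus arA opA arB opB (gval opA a) b (gval opB c) d'" for d'
    using that assms(4)
  proof (rule Jus_ZV_obtain_gsub_at)
    fix \<tau> :: "('i,'x,'z,'h) gsub"
    assume "is_gsub arB \<tau>" "sz \<tau> z = c" "hval arB opB \<tau> t = Some d'"
    with \<sigma> assms(5) show "d' = d" by blast
  qed
  ultimately show "char_justifies arA opA arB opB (ZV z) t (gval opA a) b (gval opB c) d"
    unfolding char_justifies_def by blast
qed

end
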